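(* Let $N$ be a natural number, $P=\{a\subseteq N: |a|\geq 2\}$, and let $\|\cdot\|_3$ be the graph coloring norm on subsets of $P$ (defined in the context). Let $n$ be a natural number and $A\subseteq P$. If $A$ can be split by $2^n$ sets, then $\|A\|_3\leq n$.
   Context: $N=\{0,\ldots,N-1\}$. For $A\subseteq P$ and $z\subseteq N$ let $A\restriction z=\{a\in A: a\subseteq z\}$. The relation "$\|A\|_3\geq m$" is defined recursively: $\|A\|_3\geq 0$ always; $\|A\|_3\geq 1$ iff $A\neq\emptyset$; for $m\geq 1$, $\|A\|_3\geq m+1$ iff for every $z\subseteq N$ either $\|A\restriction z\|_3\geq m$ or $\|A\restriction(N\setminus z)\|_3\geq m$. Then $\|A\|_3$ is the largest $m$ with $\|A\|_3\geq m$. $A$ is split by sets $V_0,\ldots,V_{c-1}$ (pairwise disjoint, possibly empty, with union $N$) if $A\restriction V_j=\emptyset$ for every $j<c$; $A$ can be split by $c$ sets if such a partition of $N$ into $c$ sets exists. *)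

theory Defs
  imports Main
begin

definition Pset :: "nat \<Rightarrow> nat set set" where
  "Pset N = {a. a \<subseteq> {..<N} \<and> card a \<ge> 2}"

definition restr :: "nat set set \<Rightarrow> nat set \<Rightarrow> nat set set" where
  "restr A z = {a \<in> A. a \<subseteq> z}"

text \<open>norm3_ge N A m  means  ||A||_3 >= m.\<close>
fun norm3_ge :: "nat \<Rightarrow> nat set set \<Rightarrow> nat \<Rightarrow> bool" where
  "norm3_ge N A 0 = True"
| "norm3_ge N A (Suc 0) = (A \<noteq> {})"
| "norm3_ge N A (Suc (Suc m)) =
     (\<forall>z. z \<subseteq> {..<N} \<longrightarrow>
        norm3_ge N (restr A z) (Suc m) \<or> norm3_ge N (restr A ({..<N} - z)) (Suc m))"

definition norm3 :: "nat \<Rightarrow> nat set set \<Rightarrow> nat" where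
  "norm3 N A = (GREATEST m. norm3_ge N A m)"

definition split_by :: "nat \<Rightarrow> nat set set \<Rightarrow> nat \<Rightarrow> bool" where
  "split_by N A c = (\<exists>V :: nat \<Rightarrow> nat set.
      (\<forall>i<c. \<forall>j<c. i \<noteq> j \<longrightarrow> V i \<inter> V j = {}) \<and>
      (\<Union>j<c. V j) = {..<N} \<and>
      (\<forall>j<c. restr A (V j) = {}))"

end

theory Submission
  imports Defs
begin

text \<open>If the sets \<open>V\<^sub>0, \<dots>, V\<^bsub>2^(n+1)-1\<^esub>\<close> split \<open>A\<close>, choose \<open>z\<close> to be the
  part of the ground set covered by the first half of them. Then \<open>A\<restriction>z\<close> is split by the first
  half and \<open>A\<restriction>(N\<setminus>z)\<close> by the second half, so by induction neither side has norm
  \<open>n + 1\<close>, and hence \<open>A\<close> does not have norm \<open>n + 2\<close>. For the induction it is convenient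
  to weaken "split": the sets need not be disjoint and need only cover the members of \<open>A\<close>,
  which is preserved by passing to \<open>A\<restriction>z\<close> without any adjustment of the sets.\<close>

lemma norm3_ge_Suc_imp_norm3_ge: "norm3_ge N A (Suc m) \<Longrightarrow> norm3_ge N A m"
proof (induction N A m rule: norm3_ge.induct)
  case (2 N A)
  then have "norm3_ge N (restr A {}) (Suc 0) \<or> norm3_ge N (restr A ({..<N} - {})) (Suc 0)"
    unfolding norm3_ge.simps(3) by blast
  then show ?case by (auto simp: restr_def)
next
  case (3 N A m)
  have "\<forall>z. z \<subseteq> {..<N} \<longrightarrow>
      norm3_ge N (restr A z) (Suc (Suc m)) \<or> norm3_ge N (restr A ({..<N} - z)) (Suc (Suc m))"
    using "3.prems" by (rule norm3_ge.simps(3)[THEN iffD1])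
  then show ?case
    by (intro norm3_ge.simps(3)[THEN iffD2]) (use "3.IH" in blast)
qed simp

lemma norm3_ge_antimono:
  assumes "norm3_ge N A m" and "k \<le> m"
  shows "norm3_ge N A k"
  using assms
proof (induction m)
  case (Suc m)
  then show ?case by (auto elim: le_SucE intro: norm3_ge_Suc_imp_norm3_ge)
qed simp

lemma norm3_le_if_not_norm3_ge_Suc:
  assumes "\<not> norm3_ge N A (Suc n)"
  shows "norm3 N A \<le> n"
proof -
  have bound: "m \<le> n" if "norm3_ge N A m" for m
    using assms norm3_ge_antimono[OF that, of "Suc n"] by linarith
  have "norm3_ge N A (norm3 N A)"
    unfolding norm3_def by (rule GreatestI_ex_nat[OF _ bound]) (metis norm3_ge.simps(1))
  then show ?thesis by (rule bound)
qed

lemma UN_lessThan_double: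
  fixes m :: nat
  shows "(\<Union>j<2 * m. V j) = (\<Union>j<m. V j) \<union> (\<Union>j<m. V (m + j))"
proof -
  have "x \<in> {..<m} \<union> (+) m ` {..<m}" if "x < 2 * m" for x
    using that by (cases "x < m") (auto simp: image_iff intro!: bexI[of _ "x - m"])
  then have "{..<2 * m} = {..<m} \<union> (+) m ` {..<m}"
    by auto
  then show ?thesis by auto
qed

lemma restr_restr_subset: "restr (restr A z) w \<subseteq> restr A w"
  by (auto simp: restr_def)

lemma not_norm3_ge_Suc_if_split:
  fixes V :: "nat \<Rightarrow> nat set"
  assumes "\<forall>a\<in>A. a \<subseteq> (\<Union>j<2 ^ n. V j)"
    and "\<forall>j<2 ^ n. restr A (V j) = {}"
  shows "\<not> norm3_ge N A (Suc n)"
  using assms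
proof (induction n arbitrary: A V)
  case 0
  then have "restr A (V 0) = A"
    by (auto simp: restr_def lessThan_Suc)
  with "0.prems"(2) show ?case by simp
next
  case (Suc n)
  have halves: "j < 2 ^ Suc n" "2 ^ n + j < 2 ^ Suc n" if "j < 2 ^ n" for j :: nat
    using that by simp_all
  define z where "z = {..<N} \<inter> (\<Union>j<2 ^ n. V j)"
  have "\<not> norm3_ge N (restr A z) (Suc n)"
  proof (rule Suc.IH[of "restr A z" V])
    show "\<forall>a\<in>restr A z. a \<subseteq> (\<Union>j<2 ^ n. V j)"
      by (auto simp: restr_def z_def)
    show "\<forall>j<2 ^ n. restr (restr A z) (V j) = {}"
      using Suc.prems(2) halves(1) restr_restr_subset by blast
  qed
  moreover have "\<not> norm3_ge N (restr A ({..<N} - z)) (Suc n)"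
  proof (rule Suc.IH[of "restr A ({..<N} - z)" "\<lambda>j. V (2 ^ n + j)"])
    show "\<forall>a\<in>restr A ({..<N} - z). a \<subseteq> (\<Union>j<2 ^ n. V (2 ^ n + j))"
    proof
      fix a assume "a \<in> restr A ({..<N} - z)"
      then have "a \<in> A" and disjoint: "a \<inter> (\<Union>j<2 ^ n. V j) = {}"
        by (auto simp: restr_def z_def)
      then have "a \<subseteq> (\<Union>j<2 ^ n. V j) \<union> (\<Union>j<2 ^ n. V (2 ^ n + j))"
        using Suc.prems(1) by (simp add: UN_lessThan_double[symmetric])
      with disjoint show "a \<subseteq> (\<Union>j<2 ^ n. V (2 ^ n + j))"
        by auto
    qed
    show "\<forall>j<2 ^ n. restr (restr A ({..<N} - z)) (V (2 ^ n + j)) = {}"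
      using Suc.prems(2) halves(2) restr_restr_subset by blast
  qed
  moreover have "z \<subseteq> {..<N}"
    by (simp add: z_def)
  ultimately show ?case
    unfolding norm3_ge.simps(3) by blast
qed

theorem theorem5p10:
  fixes N n :: nat and A :: "nat set set"
  assumes "A \<subseteq> Pset N"
    and "split_by N A (2 ^ n)"
  shows "norm3 N A \<le> n"
proof -
  obtain V :: "nat \<Rightarrow> nat set" where cover: "(\<Union>j<2 ^ n. V j) = {..<N}"
    and split: "\<forall>j<2 ^ n. restr A (V j) = {}"
    using assms(2) unfolding split_by_def by (elim exE conjE)
  have "\<forall>a\<in>A. a \<subseteq> (\<Union>j<2 ^ n. V j)"
    using assms(1) cover by (auto simp: Pset_def)
  then have "\<not> norm3_ge N A (Suc n)"
    using split by (rule not_norm3_ge_Suc_if_split)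
  then show ?thesis
    by (rule norm3_le_if_not_norm3_ge_Suc)
qed

end
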